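(* Let $G$ be a twin-free simple graph on vertex set $\{1,\dots,n\}$, and suppose that for some $1\le m\le n$ the set $\{1,2,\dots,m\}$ is a minimal identifying code of $G$ (i.e. an identifying code no proper subset of which is an identifying code). Then the lexicographic algorithm (Algorithm 1) applied to $G$ returns exactly $\{1,2,\dots,m\}$.
   Context: Vertices of $G$ are identified with the integers $1,\dots,n$ and ordered by the usual order. For a vertex $v$, $N(v)=\{v\}\cup\{w : vw\in E(G)\}$ is its closed neighbourhood. A set $C\subseteq V(G)$ is an identifying code if the sets $N(v)\cap C$, $v\in V(G)$, are all nonempty and pairwise distinct. $G$ is twin-free if $N(v)\neq N(w)$ for all distinct vertices $v,w$. The lexicographic algorithm (Algorithm 1): set $C_0=\emptyset$. For $j=1,2,\dots,n$ in turn: (i) if $N(j)\cap C_{j-1}=\emptyset$, set $C_j=C_{j-1}\cup\{\min N(j)\}$; (ii) otherwise, if there exists $k\in\{1,\dots,j-1\}$ with $N(k)\cap C_{j-1}=N(j)\cap C_{j-1}$, let $k$ be the least such index; if $N(j)\neq N(k)$ set $C_j=C_{j-1}\cup\{\min(N(j)\triangle N(k))\}$, while if $N(j)=N(k)$ the algorithm stops immediately and returns "failure"; (iii) otherwise set $C_j=C_{j-1}$. If the algorithm never fails, it returns $C_n$. Here $\triangle$ denotes symmetric difference. *)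

theory Defs
  imports Main
begin

definition simple_graph :: "nat \<Rightarrow> (nat \<Rightarrow> nat \<Rightarrow> bool) \<Rightarrow> bool" where
  "simple_graph n E \<longleftrightarrow> (\<forall>v w. E v w \<longrightarrow> E w v) \<and> (\<forall>v. \<not> E v v)
     \<and> (\<forall>v w. E v w \<longrightarrow> v \<in> {1..n} \<and> w \<in> {1..n})"

definition nbh :: "nat \<Rightarrow> (nat \<Rightarrow> nat \<Rightarrow> bool) \<Rightarrow> nat \<Rightarrow> nat set" where
  "nbh n E v = {v} \<union> {w \<in> {1..n}. E v w}"

definition twin_free :: "nat \<Rightarrow> (nat \<Rightarrow> nat \<Rightarrow> bool) \<Rightarrow> bool" where
  "twin_free n E \<longleftrightarrow> (\<forall>v\<in>{1..n}. \<forall>w\<in>{1..n}. v \<noteq> w \<longrightarrow> nbh n E v \<noteq> nbh n E w)"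

definition identifying_code :: "nat \<Rightarrow> (nat \<Rightarrow> nat \<Rightarrow> bool) \<Rightarrow> nat set \<Rightarrow> bool" where
  "identifying_code n E C \<longleftrightarrow> C \<subseteq> {1..n}
     \<and> (\<forall>v\<in>{1..n}. nbh n E v \<inter> C \<noteq> {})
     \<and> (\<forall>v\<in>{1..n}. \<forall>w\<in>{1..n}. v \<noteq> w \<longrightarrow> nbh n E v \<inter> C \<noteq> nbh n E w \<inter> C)"

definition minimal_identifying_code :: "nat \<Rightarrow> (nat \<Rightarrow> nat \<Rightarrow> bool) \<Rightarrow> nat set \<Rightarrow> bool" where
  "minimal_identifying_code n E C \<longleftrightarrow> identifying_code n E C
     \<and> (\<forall>D. D \<subset> C \<longrightarrow> \<not> identifying_code n E D)"

text \<open>One step j of Algorithm 1 on the current code; None means failure.\<close>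
definition lex_step :: "nat \<Rightarrow> (nat \<Rightarrow> nat \<Rightarrow> bool) \<Rightarrow> nat \<Rightarrow> nat set option \<Rightarrow> nat set option" where
  "lex_step n E j st = (case st of None \<Rightarrow> None | Some C \<Rightarrow>
     (if nbh n E j \<inter> C = {} then Some (C \<union> {Min (nbh n E j)})
      else if (\<exists>k\<in>{1..<j}. nbh n E k \<inter> C = nbh n E j \<inter> C) then
        (let k = (LEAST k. k \<in> {1..<j} \<and> nbh n E k \<inter> C = nbh n E j \<inter> C) in
          if nbh n E j \<noteq> nbh n E k
          then Some (C \<union> {Min ((nbh n E j - nbh n E k) \<union> (nbh n E k - nbh n E j))})
          else None)
      else Some C))"

fun lex_run :: "nat \<Rightarrow> (nat \<Rightarrow> nat \<Rightarrow> bool) \<Rightarrow> nat \<Rightarrow> nat set option" where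
  "lex_run n E 0 = Some {}"
| "lex_run n E (Suc j) = lex_step n E (Suc j) (lex_run n E j)"

definition lex_algorithm :: "nat \<Rightarrow> (nat \<Rightarrow> nat \<Rightarrow> bool) \<Rightarrow> nat set option" where
  "lex_algorithm n E = lex_run n E n"

end

theory Submission
  imports Defs
begin

text \<open>Every vertex the algorithm adds is the least element of a set that every identifying code
  meets: in step (i) the neighbourhood N(j), which every code dominates, and in step (ii) the
  symmetric difference N(j) \<triangle> N(k), which every code must hit to separate j from k.
  So the output lies below some vertex of every identifying code, and for the code {1..m} this
  means the output is contained in {1..m}. On the other hand the algorithm keeps the vertices
  1..j dominated and separated and, in a twin-free graph, never fails, so its output is an
  identifying code; minimality of {1..m} forces equality.\<close>

definition identifies_upto :: "nat \<Rightarrow> (nat \<Rightarrow> nat \<Rightarrow> bool) \<Rightarrow> nat \<Rightarrow> nat set \<Rightarrow> bool" where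
  "identifies_upto n E j C \<longleftrightarrow> (\<forall>v\<in>{1..j}. nbh n E v \<inter> C \<noteq> {})
     \<and> (\<forall>v\<in>{1..j}. \<forall>w\<in>{1..j}. v \<noteq> w \<longrightarrow> nbh n E v \<inter> C \<noteq> nbh n E w \<inter> C)"

definition below_every_code :: "nat \<Rightarrow> (nat \<Rightarrow> nat \<Rightarrow> bool) \<Rightarrow> nat \<Rightarrow> bool" where
  "below_every_code n E y \<longleftrightarrow> (\<forall>D. identifying_code n E D \<longrightarrow> (\<exists>x\<in>D. y \<le> x))"

lemma nbh_self: "v \<in> nbh n E v"
  unfolding nbh_def by simp

lemma nbh_subset:
  assumes "simple_graph n E" "v \<in> {1..n}"
  shows "nbh n E v \<subseteq> {1..n}"
  using assms unfolding nbh_def by auto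

lemma identifying_code_iff_identifies_upto:
  "identifying_code n E C \<longleftrightarrow> C \<subseteq> {1..n} \<and> identifies_upto n E n C"
  unfolding identifying_code_def identifies_upto_def by blast

lemma identifying_code_hits_symmetric_difference:
  assumes "identifying_code n E D" "v \<in> {1..n}" "w \<in> {1..n}" "v \<noteq> w"
  shows "((nbh n E v - nbh n E w) \<union> (nbh n E w - nbh n E v)) \<inter> D \<noteq> {}"
  using assms unfolding identifying_code_def by blast

lemma Int_neq_mono:
  assumes "A \<inter> C \<noteq> B \<inter> C" "C \<subseteq> C'"
  shows "A \<inter> C' \<noteq> B \<inter> C'"
  using assms by blast

lemma identifies_upto_Suc:
  assumes "identifies_upto n E j C" "C \<subseteq> C'"
    and "nbh n E (Suc j) \<inter> C' \<noteq> {}"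
    and "\<forall>k\<in>{1..j}. nbh n E k \<inter> C' \<noteq> nbh n E (Suc j) \<inter> C'"
  shows "identifies_upto n E (Suc j) C'"
proof -
  have C_ne: "\<forall>v\<in>{1..j}. nbh n E v \<inter> C' \<noteq> {}"
    and C_sep: "\<forall>v\<in>{1..j}. \<forall>w\<in>{1..j}. v \<noteq> w \<longrightarrow> nbh n E v \<inter> C' \<noteq> nbh n E w \<inter> C'"
    using assms(1,2) unfolding identifies_upto_def by (blast intro: Int_neq_mono)+
  have "{1..Suc j} = insert (Suc j) {1..j}" by auto
  with C_ne C_sep assms(3,4) show ?thesis
    unfolding identifies_upto_def by (metis insert_iff)
qed

lemma Min_below_every_code:
  assumes "S \<subseteq> {1..n}" "\<forall>D. identifying_code n E D \<longrightarrow> S \<inter> D \<noteq> {}"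
  shows "below_every_code n E (Min S)"
  unfolding below_every_code_def
proof (intro allI impI)
  fix D assume "identifying_code n E D"
  with assms(2) obtain x where "x \<in> S" "x \<in> D" by blast
  moreover have "finite S" using assms(1) finite_subset by blast
  ultimately show "\<exists>x\<in>D. Min S \<le> x" by (meson Min_le)
qed

lemma lex_step_undominated:
  assumes sg: "simple_graph n E" and j: "Suc j \<le> n" and C: "identifies_upto n E j C"
    and undominated: "nbh n E (Suc j) \<inter> C = {}"
  defines "x \<equiv> Min (nbh n E (Suc j))"
  shows "x \<in> {1..n}" "below_every_code n E x"
    "lex_step n E (Suc j) (Some C) = Some (insert x C)"
    "identifies_upto n E (Suc j) (insert x C)"
proof -
  let ?S = "nbh n E (Suc j)"
  have j_vertex: "Suc j \<in> {1..n}" using j by simp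
  have S_sub: "?S \<subseteq> {1..n}" using nbh_subset[OF sg j_vertex] .
  have x_S: "x \<in> ?S"
    unfolding x_def using finite_subset[OF S_sub finite_atLeastAtMost] nbh_self
    by (metis Min_in empty_iff)
  then show "x \<in> {1..n}" using S_sub by blast
  have "\<forall>D. identifying_code n E D \<longrightarrow> ?S \<inter> D \<noteq> {}"
    using j_vertex unfolding identifying_code_def by blast
  with S_sub show "below_every_code n E x"
    unfolding x_def by (rule Min_below_every_code)
  show "lex_step n E (Suc j) (Some C) = Some (insert x C)"
    using undominated by (simp add: lex_step_def x_def)
  have "\<forall>k\<in>{1..j}. nbh n E k \<inter> insert x C \<noteq> ?S \<inter> insert x C"
    using C undominated unfolding identifies_upto_def by (blast intro: Int_neq_mono[where C = C])
  with x_S show "identifies_upto n E (Suc j) (insert x C)"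
    by (intro identifies_upto_Suc[OF C]) auto
qed

lemma lex_step_clash:
  assumes sg: "simple_graph n E" and tf: "twin_free n E"
    and j: "Suc j \<le> n" and C: "identifies_upto n E j C"
    and dominated: "nbh n E (Suc j) \<inter> C \<noteq> {}"
    and clash: "\<exists>k\<in>{1..<Suc j}. nbh n E k \<inter> C = nbh n E (Suc j) \<inter> C"
  obtains x where "x \<in> {1..n}" "below_every_code n E x"
    "lex_step n E (Suc j) (Some C) = Some (insert x C)"
    "identifies_upto n E (Suc j) (insert x C)"
proof -
  let ?N = "nbh n E"
  define k where "k = (LEAST k. k \<in> {1..<Suc j} \<and> ?N k \<inter> C = ?N (Suc j) \<inter> C)"
  have "\<exists>k. k \<in> {1..<Suc j} \<and> ?N k \<inter> C = ?N (Suc j) \<inter> C"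
    using clash by blast
  from LeastI_ex[OF this] have k: "k \<in> {1..j}" "?N k \<inter> C = ?N (Suc j) \<inter> C"
    unfolding k_def by auto
  have j_vertex: "Suc j \<in> {1..n}" and k_vertex: "k \<in> {1..n}" using k(1) j by auto
  have not_twins: "?N (Suc j) \<noteq> ?N k"
    using tf j_vertex k_vertex k(1) unfolding twin_free_def by auto
  define S where "S = (?N (Suc j) - ?N k) \<union> (?N k - ?N (Suc j))"
  have S_sub: "S \<subseteq> {1..n}"
    using nbh_subset[OF sg j_vertex] nbh_subset[OF sg k_vertex] unfolding S_def by auto
  have "S \<noteq> {}" using not_twins unfolding S_def by blast
  then have Min_S: "Min S \<in> S" using finite_subset[OF S_sub finite_atLeastAtMost] by (intro Min_in)
  have "\<forall>D. identifying_code n E D \<longrightarrow> S \<inter> D \<noteq> {}"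
    using identifying_code_hits_symmetric_difference j_vertex k_vertex k(1) unfolding S_def by auto
  with S_sub have below: "below_every_code n E (Min S)" by (rule Min_below_every_code)
  have step: "lex_step n E (Suc j) (Some C) = Some (insert (Min S) C)"
    using dominated clash not_twins by (simp add: lex_step_def Let_def k_def S_def)
  have "\<forall>v\<in>{1..j}. ?N v \<inter> insert (Min S) C \<noteq> ?N (Suc j) \<inter> insert (Min S) C"
  proof
    fix v assume v: "v \<in> {1..j}"
    show "?N v \<inter> insert (Min S) C \<noteq> ?N (Suc j) \<inter> insert (Min S) C"
    proof (cases "v = k")
      case True
      then show ?thesis using Min_S unfolding S_def by blast
    next
      case False
      then have "?N v \<inter> C \<noteq> ?N (Suc j) \<inter> C"
        using C v k unfolding identifies_upto_def by metis
      then show ?thesis by (rule Int_neq_mono) auto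
    qed
  qed
  then have "identifies_upto n E (Suc j) (insert (Min S) C)"
    using dominated by (intro identifies_upto_Suc[OF C]) auto
  with that Min_S S_sub below step show ?thesis by blast
qed

lemma lex_step_identified:
  assumes C: "identifies_upto n E j C"
    and "nbh n E (Suc j) \<inter> C \<noteq> {}"
    and "\<not> (\<exists>k\<in>{1..<Suc j}. nbh n E k \<inter> C = nbh n E (Suc j) \<inter> C)"
  shows "lex_step n E (Suc j) (Some C) = Some C" "identifies_upto n E (Suc j) C"
proof -
  show "lex_step n E (Suc j) (Some C) = Some C"
    using assms(2,3) by (simp add: lex_step_def)
  have "{1..<Suc j} = {1..j}" by auto
  with assms(2,3) show "identifies_upto n E (Suc j) C"
    by (intro identifies_upto_Suc[OF C]) auto
qed

lemma lex_step_extends: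
  assumes "simple_graph n E" "twin_free n E" "Suc j \<le> n" "identifies_upto n E j C"
  obtains x where "x \<in> {1..n}" "below_every_code n E x"
      "lex_step n E (Suc j) (Some C) = Some (insert x C)"
      "identifies_upto n E (Suc j) (insert x C)"
  | "lex_step n E (Suc j) (Some C) = Some C" "identifies_upto n E (Suc j) C"
  using lex_step_undominated[OF assms(1,3,4)] lex_step_clash[OF assms]
    lex_step_identified[OF assms(4)]
  by blast

lemma lex_run_identifies:
  assumes sg: "simple_graph n E" and tf: "twin_free n E" and "j \<le> n"
  shows "\<exists>C. lex_run n E j = Some C \<and> C \<subseteq> {1..n} \<and> identifies_upto n E j C
           \<and> (\<forall>y\<in>C. below_every_code n E y)"
  using \<open>j \<le> n\<close>
proof (induction j)
  case 0
  then show ?case by (simp add: identifies_upto_def)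
next
  case (Suc j)
  then obtain C where C: "lex_run n E j = Some C" "C \<subseteq> {1..n}" "identifies_upto n E j C"
      "\<forall>y\<in>C. below_every_code n E y"
    by auto
  show ?case
    by (cases rule: lex_step_extends[OF sg tf Suc.prems C(3)]) (use C in auto)
qed

theorem lex_algorithm_identifying_code:
  assumes "simple_graph n E" "twin_free n E"
  obtains C where "lex_algorithm n E = Some C" "identifying_code n E C"
    "\<forall>y\<in>C. below_every_code n E y"
  using lex_run_identifies[OF assms order_refl]
  unfolding lex_algorithm_def identifying_code_iff_identifies_upto by blast

theorem corollary1:
  fixes n m :: nat and E :: "nat \<Rightarrow> nat \<Rightarrow> bool"
  assumes "simple_graph n E"
    and "twin_free n E"
    and "1 \<le> m" and "m \<le> n"
    and "minimal_identifying_code n E {1..m}"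
  shows "lex_algorithm n E = Some {1..m}"
proof -
  obtain C where C: "lex_algorithm n E = Some C" "identifying_code n E C"
      "\<forall>y\<in>C. below_every_code n E y"
    using lex_algorithm_identifying_code[OF assms(1,2)] .
  have code: "identifying_code n E {1..m}"
    and minimal: "\<forall>D. D \<subset> {1..m} \<longrightarrow> \<not> identifying_code n E D"
    using assms(5) unfolding minimal_identifying_code_def by auto
  have "y \<le> m" if "y \<in> C" for y
    using C(3) code that unfolding below_every_code_def by fastforce
  moreover have "C \<subseteq> {1..n}" using C(2) unfolding identifying_code_def by blast
  ultimately have "C \<subseteq> {1..m}" by auto
  with C(2) minimal have "C = {1..m}" by blast
  with C(1) show ?thesis by simp
qed

end
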